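(* Let $H$ be a real Hilbert space, $A:H\to c_0$ bounded linear with adjoint $A^*:\ell^1\to H$ (identifying $c_0^*=\ell^1$), with $A$ and $A^*$ injective. Let $H_n\subset H$ be a subspace of dimension $n$ with orthogonal projection $P_n$, and let $f^\delta\in H$. Call a solution $u^*$ of $\min\{\|u\|_1:u\in\ell^1,\ P_nA^*u=P_nf^\delta\}$ a solution with minimal support if every solution $u^{**}$ with $\operatorname{supp}u^{**}\subset\operatorname{supp}u^*$ satisfies $u^{**}=u^*$. Then every solution of this problem is a finite convex combination of solutions with minimal support.
   Context: $A^*$ is defined by $\langle A^*u,z\rangle=\sum_iu_i(Az)_i$. $\operatorname{supp}u=\{i:u_i\ne0\}$. *)

theory Defs
  imports "HOL-Analysis.Analysis"
begin

definition in_c0 :: "(nat \<Rightarrow> real) \<Rightarrow> bool" where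
  "in_c0 x \<longleftrightarrow> x \<longlonglongrightarrow> 0"

definition in_l1 :: "(nat \<Rightarrow> real) \<Rightarrow> bool" where
  "in_l1 u \<longleftrightarrow> summable (\<lambda>i. \<bar>u i\<bar>)"

definition l1norm :: "(nat \<Rightarrow> real) \<Rightarrow> real" where
  "l1norm u = (\<Sum>i. \<bar>u i\<bar>)"

definition supp :: "(nat \<Rightarrow> real) \<Rightarrow> nat set" where
  "supp u = {i. u i \<noteq> 0}"

definition orth_proj :: "'h::real_inner set \<Rightarrow> 'h \<Rightarrow> 'h" where
  "orth_proj V x = (THE y. y \<in> V \<and> (\<forall>v\<in>V. inner (x - y) v = 0))"

definition feasible :: "('h::real_inner set) \<Rightarrow> ((nat \<Rightarrow> real) \<Rightarrow> 'h) \<Rightarrow> 'h \<Rightarrow> (nat \<Rightarrow> real) \<Rightarrow> bool" where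
  "feasible V A' f u \<longleftrightarrow> in_l1 u \<and> orth_proj V (A' u) = orth_proj V f"

definition is_solution :: "('h::real_inner set) \<Rightarrow> ((nat \<Rightarrow> real) \<Rightarrow> 'h) \<Rightarrow> 'h \<Rightarrow> (nat \<Rightarrow> real) \<Rightarrow> bool" where
  "is_solution V A' f u \<longleftrightarrow> feasible V A' f u \<and> (\<forall>v. feasible V A' f v \<longrightarrow> l1norm u \<le> l1norm v)"

definition is_minsupp_solution :: "('h::real_inner set) \<Rightarrow> ((nat \<Rightarrow> real) \<Rightarrow> 'h) \<Rightarrow> 'h \<Rightarrow> (nat \<Rightarrow> real) \<Rightarrow> bool" where
  "is_minsupp_solution V A' f u \<longleftrightarrow> is_solution V A' f u \<and>
     (\<forall>w. is_solution V A' f w \<and> supp w \<subseteq> supp u \<longrightarrow> w = u)"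

end

theory Submission
  imports Defs
begin

text \<open>Every solution \<open>u\<close> has finite support: perturbing \<open>u\<close> along finitely supported
  directions in the kernel of \<open>P\<^sub>n A\<^sup>*\<close> shows that \<open>sgn u\<^sub>i = \<langle>q, g\<^sub>i\<rangle>\<close> on the support for
  a fixed \<open>q \<in> H\<^sub>n\<close>, where \<open>g\<^sub>i \<in> H\<^sub>n\<close> represents \<open>v \<mapsto> (A v)\<^sub>i\<close>; since \<open>A\<close> maps into \<open>c\<^sub>0\<close>,
  \<open>g\<^sub>i \<longrightarrow> 0\<close>, so \<open>|sgn u\<^sub>i| = 1\<close> can hold only for finitely many \<open>i\<close>.
  Two solutions have the same sign pattern (the norm is strictly subadditive otherwise), so
  if \<open>u\<close> is not of minimal support, a second solution \<open>w\<close> supported inside its support gives a line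
  through \<open>u\<close> on which the norm stays minimal until a coordinate vanishes in either direction.
  This writes \<open>u\<close> as a convex combination of two solutions of strictly smaller support, and
  induction on the size of the support finishes the proof.\<close>

definition convex_combination_of :: "((nat \<Rightarrow> real) \<Rightarrow> bool) \<Rightarrow> (nat \<Rightarrow> real) \<Rightarrow> bool" where
  "convex_combination_of M u \<longleftrightarrow>
     (\<exists>(k::nat) c w. (\<forall>j<k. M (w j) \<and> c j \<ge> (0::real)) \<and> (\<Sum>j<k. c j) = 1
                   \<and> u = (\<lambda>i. \<Sum>j<k. c j * w j i))"

lemma convex_combination_of_member: "M u \<Longrightarrow> convex_combination_of M u"
  unfolding convex_combination_of_def
  by (rule exI[of _ 1], rule exI[of _ "\<lambda>_. 1"], rule exI[of _ "\<lambda>_. u"]) auto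

lemma sum_lessThan_add: "(\<Sum>j<k + l. h j) = (\<Sum>j<k. h j) + (\<Sum>j<l. h (k + j))"
  for h :: "nat \<Rightarrow> real"
  by (induct l) auto

lemma convex_combination_of_convex:
  assumes "convex_combination_of M x" "convex_combination_of M y" "0 \<le> a" "0 \<le> b" "a + b = 1"
  shows "convex_combination_of M (\<lambda>i. a * x i + b * y i)"
proof -
  obtain k1 c1 w1 where 1: "\<forall>j<(k1::nat). M (w1 j) \<and> c1 j \<ge> (0::real)" "(\<Sum>j<k1. c1 j) = 1"
    "x = (\<lambda>i. \<Sum>j<k1. c1 j * w1 j i)"
    using assms(1) unfolding convex_combination_of_def by blast
  obtain k2 c2 w2 where 2: "\<forall>j<(k2::nat). M (w2 j) \<and> c2 j \<ge> (0::real)" "(\<Sum>j<k2. c2 j) = 1"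
    "y = (\<lambda>i. \<Sum>j<k2. c2 j * w2 j i)"
    using assms(2) unfolding convex_combination_of_def by blast
  define c where "c j = (if j < k1 then a * c1 j else b * c2 (j - k1))" for j
  define w where "w j = (if j < k1 then w1 j else w2 (j - k1))" for j
  have "\<forall>j<k1 + k2. M (w j) \<and> c j \<ge> 0"
    using 1 2 assms(3,4) by (auto simp: c_def w_def)
  moreover have "(\<Sum>j<k1 + k2. c j) = 1"
    unfolding sum_lessThan_add using 1 2 assms(5) by (simp add: c_def flip: sum_distrib_left)
  moreover have "(\<lambda>i. a * x i + b * y i) = (\<lambda>i. \<Sum>j<k1 + k2. c j * w j i)"
    unfolding sum_lessThan_add 1(3) 2(3) by (simp add: c_def w_def sum_distrib_left mult.assoc)
  ultimately show ?thesis
    unfolding convex_combination_of_def by blast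
qed


lemma in_l1_lincomb:
  assumes "in_l1 u" "in_l1 w"
  shows "in_l1 (\<lambda>i. a * u i + b * w i)"
proof -
  have "summable (\<lambda>i. \<bar>a\<bar> * \<bar>u i\<bar> + \<bar>b\<bar> * \<bar>w i\<bar>)"
    using assms unfolding in_l1_def by (intro summable_add summable_mult)
  then show ?thesis
    unfolding in_l1_def
    by (rule summable_comparison_test') (simp add: abs_mult order_trans[OF abs_triangle_ineq])
qed

lemma in_l1_finite_supp: "finite D \<Longrightarrow> (\<And>j. j \<notin> D \<Longrightarrow> d j = 0) \<Longrightarrow> in_l1 d"
  unfolding in_l1_def by (rule summable_finite) auto

lemma l1norm_finite_supp: "finite T \<Longrightarrow> supp v \<subseteq> T \<Longrightarrow> l1norm v = (\<Sum>i\<in>T. \<bar>v i\<bar>)"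
  unfolding l1norm_def by (intro suminf_finite) (auto simp: supp_def)

lemma abs_eq_sgn_mult: "a \<noteq> 0 \<Longrightarrow> 0 \<le> a * b \<Longrightarrow> \<bar>b\<bar> = sgn a * (b::real)"
  by (cases "a > 0") (auto simp: zero_le_mult_iff)

lemma l1norm_eq_sgn_sum:
  assumes "finite (supp u)" "supp v \<subseteq> supp u" "\<And>i. 0 \<le> u i * v i"
  shows "l1norm v = (\<Sum>i\<in>supp u. sgn (u i) * v i)"
  unfolding l1norm_finite_supp[OF assms(1,2)]
  using assms(3) by (intro sum.cong) (auto simp: supp_def abs_eq_sgn_mult)

lemma l1norm_add_finite_supp:
  assumes "in_l1 u" "finite D" "\<And>j. j \<notin> D \<Longrightarrow> d j = 0"
  shows "l1norm (\<lambda>j. u j + d j) = l1norm u + (\<Sum>j\<in>D. \<bar>u j + d j\<bar> - \<bar>u j\<bar>)"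
proof -
  have "summable (\<lambda>j. \<bar>u j + d j\<bar> - \<bar>u j\<bar>)"
    by (rule summable_finite[OF assms(2)]) (simp add: assms(3))
  then have "l1norm (\<lambda>j. u j + d j) = l1norm u + (\<Sum>j. \<bar>u j + d j\<bar> - \<bar>u j\<bar>)"
    using assms(1) unfolding l1norm_def in_l1_def by (subst suminf_add) auto
  also have "(\<Sum>j. \<bar>u j + d j\<bar> - \<bar>u j\<bar>) = (\<Sum>j\<in>D. \<bar>u j + d j\<bar> - \<bar>u j\<bar>)"
    by (rule suminf_finite[OF assms(2)]) (simp add: assms(3))
  finally show ?thesis .
qed

lemma l1norm_midpoint_same_sign:
  assumes u: "in_l1 u" and w: "in_l1 w"
    and le: "l1norm u + l1norm w \<le> 2 * l1norm (\<lambda>i. (u i + w i) / 2)"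
  shows "0 \<le> u i * w i"
proof -
  define h where "h i = \<bar>u i\<bar> + \<bar>w i\<bar> - \<bar>u i + w i\<bar>" for i
  have h_nonneg: "0 \<le> h j" for j
    unfolding h_def using abs_triangle_ineq by simp
  have "(\<lambda>i. \<bar>u i\<bar> + \<bar>w i\<bar>) sums (l1norm u + l1norm w)"
    using u w unfolding in_l1_def l1norm_def by (intro sums_add summable_sums)
  moreover have "(\<lambda>i. \<bar>u i + w i\<bar>) sums (2 * l1norm (\<lambda>i. (u i + w i) / 2))"
  proof -
    have "summable (\<lambda>i. \<bar>u i + w i\<bar>)"
      using in_l1_lincomb[OF u w, of 1 1] unfolding in_l1_def by simp
    then show ?thesis
      unfolding l1norm_def by (simp add: abs_divide suminf_divide summable_sums)
  qed
  ultimately have h_sums: "h sums (l1norm u + l1norm w - 2 * l1norm (\<lambda>i. (u i + w i) / 2))"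
    unfolding h_def by (rule sums_diff)
  then have "suminf h \<le> 0"
    using le by (simp add: sums_unique[symmetric])
  moreover have "0 \<le> suminf h"
    using h_sums h_nonneg by (simp add: sums_summable suminf_nonneg)
  ultimately have "h i = 0"
    using h_sums h_nonneg by (simp add: sums_summable suminf_eq_zero_iff)
  then show ?thesis
    unfolding h_def by (cases "u i \<ge> 0"; cases "w i \<ge> 0")
      (auto simp: mult_nonneg_nonneg mult_nonpos_nonpos)
qed

lemma abs_add_mult_eq:
  fixes a b t :: real
  assumes "a \<noteq> 0" "\<bar>t\<bar> * \<bar>b\<bar> \<le> \<bar>a\<bar>"
  shows "\<bar>a + t * b\<bar> = \<bar>a\<bar> + t * (sgn a * b)"
proof -
  have "\<bar>t * b\<bar> \<le> \<bar>a\<bar>"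
    using assms(2) by (simp add: abs_mult)
  then show ?thesis
    using assms(1) by (cases "a > 0") (auto simp: abs_le_iff)
qed

lemma sgn_mult_less_0_iff: "sgn a * b < 0 \<longleftrightarrow> a * b < (0::real)"
  by (cases a rule: linorder_cases) (auto simp: mult_less_0_iff)

lemma sum_eq_0_imp_ex_neg:
  fixes x :: "'a \<Rightarrow> real"
  assumes "finite T" "(\<Sum>i\<in>T. x i) = 0" "i \<in> T" "x i \<noteq> 0"
  shows "\<exists>j\<in>T. x j < 0"
  using assms sum_nonneg_eq_0_iff[OF assms(1), of x] by (meson not_less)

text \<open>The step is the smallest ratio \<open>-u\<^sub>i / d\<^sub>i\<close> over the coordinates where \<open>d\<close> points
  towards zero.\<close>

lemma exists_sign_preserving_step_to_zero:
  fixes u d :: "nat \<Rightarrow> real"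
  assumes T: "finite T" and i0: "i0 \<in> T" "u i0 * d i0 < 0"
  shows "\<exists>t>0. (\<forall>i\<in>T. 0 \<le> u i * (u i + t * d i)) \<and> (\<exists>i\<in>T. u i + t * d i = 0)"
proof -
  define I where "I = {i\<in>T. u i * d i < 0}"
  have I: "finite I" "I \<noteq> {}"
    using T i0 unfolding I_def by auto
  define t where "t = Min ((\<lambda>i. - u i / d i) ` I)"
  have ratio_pos: "0 < - u i / d i" if "i \<in> I" for i
    using that unfolding I_def by (auto simp: mult_less_0_iff divide_pos_neg divide_neg_pos)
  have "t \<in> (\<lambda>i. - u i / d i) ` I"
    unfolding t_def using I by (intro Min_in) auto
  then obtain i1 where i1: "i1 \<in> I" "t = - u i1 / d i1"
    by blast
  have t_pos: "0 < t"
    using ratio_pos i1 by simp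
  have t_le: "t \<le> - u i / d i" if "i \<in> I" for i
    unfolding t_def using I that by simp
  have "0 \<le> u i * (u i + t * d i)" if "i \<in> T" for i
  proof (cases "i \<in> I")
    case True
    then have ud: "u i * d i < 0" and "d i \<noteq> 0"
      unfolding I_def by auto
    have "u i * u i + (- u i / d i) * (u i * d i) \<le> u i * u i + t * (u i * d i)"
      using t_le[OF True] ud by (intro add_left_mono mult_right_mono_neg) auto
    moreover have "u i * u i + (- u i / d i) * (u i * d i) = 0"
      using \<open>d i \<noteq> 0\<close> by (simp add: field_simps)
    ultimately show ?thesis
      by (simp add: algebra_simps)
  next
    case False
    then have "0 \<le> u i * d i"
      using that unfolding I_def by simp
    then show ?thesis
      using t_pos by (simp add: algebra_simps)
  qed
  moreover have "u i1 + t * d i1 = 0"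
    using i1 ratio_pos[OF i1(1)] by (auto simp: field_simps)
  ultimately show ?thesis
    using t_pos i1(1) unfolding I_def by blast
qed


section \<open>Minimizers of the \<open>\<ell>\<^sup>1\<close>-norm over an affine constraint\<close>

definition l1_minimizer :: "((nat \<Rightarrow> real) \<Rightarrow> bool) \<Rightarrow> (nat \<Rightarrow> real) \<Rightarrow> bool" where
  "l1_minimizer Fe u \<longleftrightarrow> Fe u \<and> (\<forall>v. Fe v \<longrightarrow> l1norm u \<le> l1norm v)"

definition minimal_support_minimizer :: "((nat \<Rightarrow> real) \<Rightarrow> bool) \<Rightarrow> (nat \<Rightarrow> real) \<Rightarrow> bool" where
  "minimal_support_minimizer Fe u \<longleftrightarrow>
     l1_minimizer Fe u \<and> (\<forall>w. l1_minimizer Fe w \<and> supp w \<subseteq> supp u \<longrightarrow> w = u)"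

locale affine_l1_constraint =
  fixes Fe :: "(nat \<Rightarrow> real) \<Rightarrow> bool"
  assumes feasible_in_l1: "Fe u \<Longrightarrow> in_l1 u"
    and feasible_line: "Fe u \<Longrightarrow> Fe w \<Longrightarrow> Fe (\<lambda>i. u i + t * (w i - u i))"
begin

lemma minimizer_l1norm_eq: "l1_minimizer Fe u \<Longrightarrow> l1_minimizer Fe w \<Longrightarrow> l1norm u = l1norm w"
  unfolding l1_minimizer_def by (meson order.antisym)

lemma minimizers_same_sign:
  assumes u: "l1_minimizer Fe u" and w: "l1_minimizer Fe w"
  shows "0 \<le> u i * w i"
proof (rule l1norm_midpoint_same_sign)
  show "in_l1 u" "in_l1 w"
    using u w feasible_in_l1 unfolding l1_minimizer_def by auto
  have "(\<lambda>i. u i + 1 / 2 * (w i - u i)) = (\<lambda>i. (u i + w i) / 2)"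
    by (simp add: field_simps)
  then have "Fe (\<lambda>i. (u i + w i) / 2)"
    using feasible_line[of u w "1 / 2"] u w unfolding l1_minimizer_def by metis
  then show "l1norm u + l1norm w \<le> 2 * l1norm (\<lambda>i. (u i + w i) / 2)"
    using u minimizer_l1norm_eq[OF u w] unfolding l1_minimizer_def by fastforce
qed

text \<open>The norm is linear on the sign pattern of \<open>u\<close>, and equal to \<open>\<parallel>u\<parallel>\<^sub>1\<close> at both ends of the
  segment.\<close>

lemma minimizer_on_line:
  assumes u: "l1_minimizer Fe u" and w: "l1_minimizer Fe w"
    and fin: "finite (supp u)" and sub: "supp w \<subseteq> supp u"
    and signs: "\<And>i. 0 \<le> u i * (u i + t * (w i - u i))"
  shows "l1_minimizer Fe (\<lambda>i. u i + t * (w i - u i))"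
proof -
  let ?v = "\<lambda>i. u i + t * (w i - u i)"
  have "supp ?v \<subseteq> supp u"
    using sub by (auto simp: supp_def)
  then have "l1norm ?v = (\<Sum>i\<in>supp u. sgn (u i) * ?v i)"
    using l1norm_eq_sgn_sum[OF fin _ signs] by blast
  also have "\<dots> = (\<Sum>i\<in>supp u. sgn (u i) * u i)
      + t * ((\<Sum>i\<in>supp u. sgn (u i) * w i) - (\<Sum>i\<in>supp u. sgn (u i) * u i))"
    by (simp add: algebra_simps sum.distrib sum_subtractf sum_distrib_left)
  also have "(\<Sum>i\<in>supp u. sgn (u i) * w i) = l1norm w"
    using l1norm_eq_sgn_sum[OF fin sub minimizers_same_sign[OF u w]] by simp
  also have "(\<Sum>i\<in>supp u. sgn (u i) * u i) = l1norm u"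
    using l1norm_eq_sgn_sum[OF fin order_refl] by simp
  finally have "l1norm ?v = l1norm u"
    using minimizer_l1norm_eq[OF u w] by simp
  then show ?thesis
    using u w feasible_line unfolding l1_minimizer_def by auto
qed

lemma minimizer_shrink_support:
  assumes u: "l1_minimizer Fe u" and w: "l1_minimizer Fe w"
    and fin: "finite (supp u)" and sub: "supp w \<subseteq> supp u"
    and i0: "i0 \<in> supp u" "u i0 * (s * (w i0 - u i0)) < 0"
  shows "\<exists>t. 0 < s * t \<and> l1_minimizer Fe (\<lambda>i. u i + t * (w i - u i))
             \<and> supp (\<lambda>i. u i + t * (w i - u i)) \<subset> supp u"
proof -
  obtain \<tau> j where \<tau>: "0 < \<tau>" "\<forall>i\<in>supp u. 0 \<le> u i * (u i + \<tau> * (s * (w i - u i)))"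
    and j: "j \<in> supp u" "u j + \<tau> * (s * (w j - u j)) = 0"
    using exists_sign_preserving_step_to_zero[where u = u and d = "\<lambda>i. s * (w i - u i)", OF fin i0] by blast
  define t where "t = \<tau> * s"
  let ?v = "\<lambda>i. u i + t * (w i - u i)"
  have "s \<noteq> 0"
    using i0(2) by auto
  then have "0 < s * t"
    using \<tau>(1) by (simp add: t_def mult.left_commute)
      (metis mult_pos_pos not_real_square_gt_zero)
  moreover have "l1_minimizer Fe ?v"
  proof (rule minimizer_on_line[OF u w fin sub])
    fix i
    show "0 \<le> u i * (u i + t * (w i - u i))"
      using \<tau>(2) by (cases "i \<in> supp u") (auto simp: t_def supp_def mult.assoc)
  qed
  moreover have "supp ?v \<subset> supp u"
    using sub j by (auto simp: supp_def t_def mult.assoc)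
  ultimately show ?thesis
    by blast
qed

text \<open>Along \<open>w - u\<close> the signed sum \<open>\<Sum> sgn u\<^sub>i (w\<^sub>i - u\<^sub>i) = \<parallel>w\<parallel>\<^sub>1 - \<parallel>u\<parallel>\<^sub>1\<close> vanishes, so coordinates move towards zero in
  both directions.\<close>

lemma non_minimal_minimizer_splits:
  assumes u: "l1_minimizer Fe u" and fin: "finite (supp u)"
    and non_minimal: "\<not> minimal_support_minimizer Fe u"
  obtains v1 v2 a where "l1_minimizer Fe v1" "l1_minimizer Fe v2"
    "supp v1 \<subset> supp u" "supp v2 \<subset> supp u" "0 \<le> a" "a \<le> 1"
    "u = (\<lambda>i. a * v1 i + (1 - a) * v2 i)"
proof -
  obtain w where w: "l1_minimizer Fe w" "supp w \<subseteq> supp u" "w \<noteq> u"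
    using u non_minimal unfolding minimal_support_minimizer_def by blast
  define x where "x i = sgn (u i) * (w i - u i)" for i
  have "(\<Sum>i\<in>supp u. x i) = l1norm w - l1norm u"
    using l1norm_eq_sgn_sum[OF fin w(2) minimizers_same_sign[OF u w(1)]]
      l1norm_eq_sgn_sum[OF fin order_refl]
    by (simp add: x_def algebra_simps sum_subtractf)
  then have sum_x: "(\<Sum>i\<in>supp u. x i) = 0"
    using minimizer_l1norm_eq[OF u w(1)] by simp
  obtain i where "w i \<noteq> u i"
    using w(3) by blast
  then have i: "i \<in> supp u" "x i \<noteq> 0"
    using w(2) unfolding x_def supp_def by (auto simp: sgn_0_0)
  obtain i1 where i1: "i1 \<in> supp u" "u i1 * (1 * (w i1 - u i1)) < 0"
    using sum_eq_0_imp_ex_neg[OF fin sum_x i] by (auto simp: x_def sgn_mult_less_0_iff)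
  have "(\<Sum>i\<in>supp u. - x i) = 0"
    using sum_x by (simp add: sum_negf)
  then obtain i2 where "i2 \<in> supp u" "- x i2 < 0"
    using sum_eq_0_imp_ex_neg[where x = "\<lambda>j. - x j", OF fin _ i(1)] i(2) by auto
  then have i2: "i2 \<in> supp u" "u i2 * (- 1 * (w i2 - u i2)) < 0"
    using sgn_mult_less_0_iff[of "u i2" "u i2 - w i2"] by (auto simp: x_def algebra_simps)
  obtain t1 where t1: "0 < t1" "l1_minimizer Fe (\<lambda>i. u i + t1 * (w i - u i))"
    "supp (\<lambda>i. u i + t1 * (w i - u i)) \<subset> supp u"
    using minimizer_shrink_support[OF u w(1) fin w(2) i1] by auto
  obtain t2 where t2: "t2 < 0" "l1_minimizer Fe (\<lambda>i. u i + t2 * (w i - u i))"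
    "supp (\<lambda>i. u i + t2 * (w i - u i)) \<subset> supp u"
    using minimizer_shrink_support[OF u w(1) fin w(2) i2] by auto
  define a where "a = - t2 / (t1 - t2)"
  have "0 \<le> a" "a \<le> 1"
    using t1(1) t2(1) by (auto simp: a_def field_simps)
  moreover have "u = (\<lambda>i. a * (u i + t1 * (w i - u i)) + (1 - a) * (u i + t2 * (w i - u i)))"
  proof
    fix i
    have "a * t1 + (1 - a) * t2 = 0"
      using t1(1) t2(1) by (simp add: a_def field_simps)
    moreover have "a * (u i + t1 * (w i - u i)) + (1 - a) * (u i + t2 * (w i - u i))
        = u i + (a * t1 + (1 - a) * t2) * (w i - u i)"
      by (simp add: algebra_simps)
    ultimately show "u i = a * (u i + t1 * (w i - u i)) + (1 - a) * (u i + t2 * (w i - u i))"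
      by simp
  qed
  ultimately show thesis
    using that t1(2,3) t2(2,3) by blast
qed

theorem minimizer_convex_combination_of_minimal:
  assumes "l1_minimizer Fe u" "finite (supp u)"
  shows "convex_combination_of (minimal_support_minimizer Fe) u"
  using assms
proof (induction "card (supp u)" arbitrary: u rule: less_induct)
  case less
  show ?case
  proof (cases "minimal_support_minimizer Fe u")
    case True
    then show ?thesis
      by (rule convex_combination_of_member)
  next
    case False
    then obtain v1 v2 a where v: "l1_minimizer Fe v1" "l1_minimizer Fe v2"
      "supp v1 \<subset> supp u" "supp v2 \<subset> supp u" "0 \<le> a" "a \<le> 1"
      and u: "u = (\<lambda>i. a * v1 i + (1 - a) * v2 i)"
      using non_minimal_minimizer_splits less.prems by blast
    have "convex_combination_of (minimal_support_minimizer Fe) v1"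
      "convex_combination_of (minimal_support_minimizer Fe) v2"
      using v less by (auto intro!: less.hyps psubset_card_mono intro: finite_subset)
    then show ?thesis
      unfolding u using v(5,6) by (intro convex_combination_of_convex) auto
  qed
qed

text \<open>First-order optimality: for \<open>|t|\<close> small the norm is affine along a finitely supported
  feasible direction inside the support, with slope \<open>\<Sum> sgn u\<^sub>j d\<^sub>j\<close>.\<close>

lemma minimizer_first_order:
  assumes u: "l1_minimizer Fe u" and D: "finite D" "D \<subseteq> supp u"
    and d: "\<And>j. j \<notin> D \<Longrightarrow> d j = 0" and line: "\<And>t. Fe (\<lambda>j. u j + t * d j)"
  shows "(\<Sum>j\<in>D. sgn (u j) * d j) = 0"
proof -
  define K where "K = (\<Sum>j\<in>D. sgn (u j) * d j)"
  define e where "e = Min (insert 1 ((\<lambda>j. \<bar>u j\<bar> / (\<bar>d j\<bar> + 1)) ` D))"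
  have u_nonzero: "u j \<noteq> 0" if "j \<in> D" for j
    using that D(2) unfolding supp_def by blast
  have e_pos: "0 < e"
    unfolding e_def using D(1) u_nonzero by (subst Min_gr_iff) auto
  have e_small: "e * \<bar>d j\<bar> \<le> \<bar>u j\<bar>" if "j \<in> D" for j
  proof -
    have "e \<le> \<bar>u j\<bar> / (\<bar>d j\<bar> + 1)"
      unfolding e_def using D(1) that by simp
    then have "e * (\<bar>d j\<bar> + 1) \<le> \<bar>u j\<bar>"
      by (simp add: field_simps)
    then show ?thesis
      using e_pos by (simp add: algebra_simps)
  qed
  have norm_line: "l1norm (\<lambda>j. u j + t * d j) = l1norm u + t * K" if "\<bar>t\<bar> = e" for t
  proof -
    have "in_l1 u"
      using u feasible_in_l1 unfolding l1_minimizer_def by blast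
    then have "l1norm (\<lambda>j. u j + t * d j) = l1norm u + (\<Sum>j\<in>D. \<bar>u j + t * d j\<bar> - \<bar>u j\<bar>)"
      using D(1) d by (intro l1norm_add_finite_supp) auto
    also have "(\<Sum>j\<in>D. \<bar>u j + t * d j\<bar> - \<bar>u j\<bar>) = (\<Sum>j\<in>D. t * (sgn (u j) * d j))"
      using that e_small u_nonzero abs_add_mult_eq by (intro sum.cong) auto
    finally show ?thesis
      unfolding K_def by (simp add: sum_distrib_left)
  qed
  have "l1norm u \<le> l1norm (\<lambda>j. u j + e * d j)" "l1norm u \<le> l1norm (\<lambda>j. u j + - e * d j)"
    using u line unfolding l1_minimizer_def by blast+
  then have "0 \<le> e * K" "0 \<le> - e * K"
    using norm_line[of e] norm_line[of "- e"] e_pos by auto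
  then show ?thesis
    using e_pos unfolding K_def by (simp add: zero_le_mult_iff mult_le_0_iff)
qed

end


section \<open>Representing functionals on a finite-dimensional subspace\<close>

lemma orthogonal_basis_representer:
  fixes C :: "'a::real_inner set" and \<phi> :: "'a \<Rightarrow> real"
  assumes C: "finite C" "pairwise orthogonal C" and \<phi>: "linear \<phi>" and v: "v \<in> span C"
  shows "inner (\<Sum>c\<in>C. (\<phi> c / inner c c) *\<^sub>R c) v = \<phi> v"
  using v
proof (rule span_induct)
  show "subspace {v. inner (\<Sum>c\<in>C. (\<phi> c / inner c c) *\<^sub>R c) v = \<phi> v}"
    using \<phi> unfolding subspace_def
    by (auto simp: linear_0 linear_add linear_scale inner_add_right)
next
  fix c' assume c': "c' \<in> C"
  have "inner (\<Sum>c\<in>C. (\<phi> c / inner c c) *\<^sub>R c) c' = (\<Sum>c\<in>C. (\<phi> c / inner c c) * inner c c')"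
    by (simp add: inner_sum_left)
  also have "\<dots> = (\<Sum>c\<in>C. if c = c' then (\<phi> c' / inner c' c') * inner c' c' else 0)"
    using C(2) c' by (intro sum.cong) (auto simp: pairwise_def orthogonal_def)
  also have "\<dots> = (\<phi> c' / inner c' c') * inner c' c'"
    using C(1) c' by simp
  also have "\<dots> = \<phi> c'"
    using \<phi> by (cases "c' = 0") (auto simp: linear_0)
  finally show "inner (\<Sum>c\<in>C. (\<phi> c / inner c c) *\<^sub>R c) c' = \<phi> c'" .
qed

lemma exists_inner_eq_on_independent:
  fixes G :: "'a::real_inner set"
  assumes "finite G" "independent G"
  obtains q where "\<And>g. g \<in> G \<Longrightarrow> inner q g = s g"
proof -
  obtain \<phi> where \<phi>: "linear \<phi>" "\<forall>g\<in>G. \<phi> g = s g"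
    using linear_independent_extend[OF assms(2), of s] by blast
  obtain C where C: "finite C" "span C = span G" "pairwise orthogonal C"
    using basis_orthogonal[OF assms(1)] by blast
  have "inner (\<Sum>c\<in>C. (\<phi> c / inner c c) *\<^sub>R c) g = s g" if "g \<in> G" for g
    using orthogonal_basis_representer[OF C(1,3) \<phi>(1), of g] \<phi>(2) C(2) that by (simp add: span_base)
  then show thesis
    by (rule that)
qed

text \<open>Take \<open>q\<close> dual to a basis \<open>{x\<^sub>j | j \<in> S}\<close> of the span of all \<open>x\<^sub>j\<close>, and express each \<open>x\<^sub>i\<close> in that basis.\<close>

lemma exists_inner_representation:
  fixes x :: "'i \<Rightarrow> 'a::real_inner"
  assumes B: "finite B" and x: "\<And>j. j \<in> T \<Longrightarrow> x j \<in> span B"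
    and relation: "\<And>D d. finite D \<Longrightarrow> D \<subseteq> T \<Longrightarrow> (\<Sum>j\<in>D. d j *\<^sub>R x j) = 0 \<Longrightarrow> (\<Sum>j\<in>D. d j * s j) = 0"
  shows "\<exists>q. \<forall>j\<in>T. s j = inner q (x j)"
proof -
  obtain G where G: "G \<subseteq> x ` T" "independent G" "x ` T \<subseteq> span G"
    using maximal_independent_subset[of "x ` T"] by blast
  obtain S where S: "S \<subseteq> T" "inj_on x S" "G = x ` S"
    using G(1) by (auto simp: subset_image_inj)
  have "finite G"
    using independent_span_bound[OF B G(2)] G(1) x by blast
  then have "finite S"
    using S(2,3) finite_imageD by blast
  obtain q where q_G: "\<And>g. g \<in> G \<Longrightarrow> inner q g = s (inv_into S x g)"
    using exists_inner_eq_on_independent[where s = "\<lambda>g. s (inv_into S x g)", OF \<open>finite G\<close> G(2)]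
    by blast
  have q: "inner q (x j) = s j" if "j \<in> S" for j
  proof -
    have "x j \<in> G"
      using S(3) that by blast
    then show ?thesis
      using q_G inv_into_f_f[OF S(2) that] by simp
  qed
  have "s i = inner q (x i)" if i: "i \<in> T" for i
  proof (cases "i \<in> S")
    case True
    then show ?thesis
      using q by simp
  next
    case False
    have "x i \<in> span (x ` S)"
      unfolding S(3)[symmetric] using G(3) i by blast
    then obtain \<beta> where "(\<Sum>g\<in>x ` S. \<beta> g *\<^sub>R g) = x i"
      using span_finite[of "x ` S"] \<open>finite S\<close> by auto
    then have expansion: "(\<Sum>j\<in>S. \<beta> (x j) *\<^sub>R x j) = x i"
      using S(2) by (simp add: sum.reindex)
    define d where "d j = (if j = i then 1 else - \<beta> (x j))" for j
    have d_i: "d i = 1"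
      by (simp add: d_def)
    have d_S: "d j = - \<beta> (x j)" if "j \<in> S" for j
      using False that by (auto simp: d_def)
    have "(\<Sum>j\<in>insert i S. d j *\<^sub>R x j) = x i - (\<Sum>j\<in>S. \<beta> (x j) *\<^sub>R x j)"
      using \<open>finite S\<close> False d_i d_S by (simp add: sum_negf)
    then have "(\<Sum>j\<in>insert i S. d j * s j) = 0"
      using expansion \<open>finite S\<close> S(1) i by (intro relation) auto
    then have "s i = (\<Sum>j\<in>S. \<beta> (x j) * s j)"
      using \<open>finite S\<close> False d_i d_S by (simp add: sum_negf)
    also have "\<dots> = inner q (\<Sum>j\<in>S. \<beta> (x j) *\<^sub>R x j)"
      using q by (simp add: inner_sum_right)
    finally show ?thesis
      using expansion by simp
  qed
  then show ?thesis
    by blast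
qed

lemma orth_proj_span:
  fixes S :: "'a::real_inner set"
  assumes "finite S"
  shows "orth_proj (span S) x \<in> span S \<and> (\<forall>v\<in>span S. inner (x - orth_proj (span S) x) v = 0)"
proof -
  obtain C where C: "finite C" "span C = span S" "pairwise orthogonal C"
    using basis_orthogonal[OF assms] by blast
  define p where "p = (\<Sum>c\<in>C. (inner x c / inner c c) *\<^sub>R c)"
  have p_span: "p \<in> span S"
    unfolding p_def C(2)[symmetric] by (intro span_sum span_scale span_base)
  have p_orth: "\<forall>v\<in>span S. inner (x - p) v = 0"
    using orthogonal_basis_representer[OF C(1,3) bounded_linear.linear[OF bounded_linear_inner_right]] C(2)
    unfolding p_def by (simp add: inner_diff_left)
  have p_unique: "y = p" if "y \<in> span S" "\<forall>v\<in>span S. inner (x - y) v = 0" for y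
  proof -
    have "y - p \<in> span S"
      using that(1) p_span by (rule span_diff)
    then have "inner (y - p) (y - p) = inner (x - p) (y - p) - inner (x - y) (y - p)"
      by (simp add: inner_diff_left)
    also have "\<dots> = 0"
      using p_orth that(2) \<open>y - p \<in> span S\<close> by simp
    finally show ?thesis
      by simp
  qed
  have "orth_proj (span S) x = p"
    unfolding orth_proj_def
  proof (rule the_equality)
    show "p \<in> span S \<and> (\<forall>v\<in>span S. inner (x - p) v = 0)"
      using p_span p_orth by blast
  qed (use p_unique in blast)
  with p_span p_orth show ?thesis
    by simp
qed

lemma orth_proj_span_eq_iff:
  fixes S :: "'a::real_inner set"
  assumes "finite S"
  shows "orth_proj (span S) a = orth_proj (span S) b \<longleftrightarrow> (\<forall>v\<in>span S. inner (a - b) v = 0)"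
proof -
  let ?d = "orth_proj (span S) a - orth_proj (span S) b"
  have d: "inner (a - b) v = inner ?d v" if "v \<in> span S" for v
    using orth_proj_span[OF assms, of a] orth_proj_span[OF assms, of b] that
    by (simp add: inner_diff_left)
  have "?d \<in> span S"
    using orth_proj_span[OF assms] by (simp add: span_diff)
  then have "?d = 0 \<longleftrightarrow> (\<forall>v\<in>span S. inner ?d v = 0)"
    by auto
  then show ?thesis
    using d by simp
qed


section \<open>The projected \<open>\<ell>\<^sup>1\<close>-problem\<close>

locale projected_l1_problem =
  fixes A :: "'h::real_inner \<Rightarrow> (nat \<Rightarrow> real)"
    and A' :: "(nat \<Rightarrow> real) \<Rightarrow> 'h"
    and B :: "'h set" and f :: 'h
  assumes A_lin: "\<And>a b x y. A (a *\<^sub>R x + b *\<^sub>R y) = (\<lambda>i. a * A x i + b * A y i)"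
    and A_c0: "\<And>z. in_c0 (A z)"
    and A_bdd: "\<exists>C. \<forall>z i. \<bar>A z i\<bar> \<le> C * norm z"
    and adjoint: "\<And>u z. in_l1 u \<Longrightarrow> inner (A' u) z = (\<Sum>i. u i * A z i)"
    and B_fin: "finite B"
begin

abbreviation F :: "(nat \<Rightarrow> real) \<Rightarrow> bool" where
  "F \<equiv> feasible (span B) A' f"

lemma linear_A_coordinate: "linear (\<lambda>z. A z i)"
proof (rule linearI)
  show "A (x + y) i = A x i + A y i" for x y
    using A_lin[of 1 x 1 y] by (simp add: fun_eq_iff)
  show "A (c *\<^sub>R x) i = c *\<^sub>R A x i" for c x
    using A_lin[of c x 0 x] by (simp add: fun_eq_iff)
qed

lemma summable_mult_A:
  assumes "in_l1 u"
  shows "summable (\<lambda>i. u i * A z i)"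
proof -
  obtain C where C: "\<And>i. \<bar>A z i\<bar> \<le> C * norm z"
    using A_bdd by blast
  have "summable (\<lambda>i. \<bar>u i\<bar> * (C * norm z))"
    using assms unfolding in_l1_def by (rule summable_mult2)
  then show ?thesis
    by (rule summable_comparison_test')
      (use C in \<open>auto simp: abs_mult intro: mult_left_mono\<close>)
qed

lemma feasible_iff: "F u \<longleftrightarrow> in_l1 u \<and> (\<forall>v\<in>span B. (\<Sum>i. u i * A v i) = inner f v)"
  unfolding feasible_def orth_proj_span_eq_iff[OF B_fin]
  by (auto simp: adjoint inner_diff_left)

lemma feasible_add:
  assumes u: "F u" and d: "in_l1 d" and kernel: "\<And>v. v \<in> span B \<Longrightarrow> (\<Sum>j. d j * A v j) = 0"
  shows "F (\<lambda>j. u j + d j)"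
proof -
  have "in_l1 u"
    using u feasible_iff by blast
  have "in_l1 (\<lambda>j. u j + d j)"
    using in_l1_lincomb[OF \<open>in_l1 u\<close> d, of 1 1] by simp
  moreover have "(\<Sum>j. (u j + d j) * A v j) = inner f v" if v: "v \<in> span B" for v
  proof -
    have "(\<Sum>j. (u j + d j) * A v j) = (\<Sum>j. u j * A v j) + (\<Sum>j. d j * A v j)"
      using summable_mult_A[OF \<open>in_l1 u\<close>] summable_mult_A[OF d]
      by (subst suminf_add) (auto simp: distrib_right)
    then show ?thesis
      using u v kernel feasible_iff by simp
  qed
  ultimately show ?thesis
    using feasible_iff by blast
qed

sublocale affine_l1_constraint F
proof
  show "in_l1 u" if "F u" for u
    using that feasible_iff by blast
next
  fix u w t assume u: "F u" and w: "F w"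
  have l1: "in_l1 u" "in_l1 w"
    using u w feasible_iff by auto
  show "F (\<lambda>i. u i + t * (w i - u i))"
  proof (rule feasible_add[OF u])
    show "in_l1 (\<lambda>i. t * (w i - u i))"
      using in_l1_lincomb[OF l1(2,1), of t "- t"] by (simp add: algebra_simps)
    fix v assume v: "v \<in> span B"
    have "(\<lambda>i. t * (w i * A v i - u i * A v i)) sums (t * ((\<Sum>i. w i * A v i) - (\<Sum>i. u i * A v i)))"
      using summable_mult_A[OF l1(1)] summable_mult_A[OF l1(2)]
      by (intro sums_mult sums_diff summable_sums)
    moreover have "(\<lambda>i. t * (w i - u i) * A v i) = (\<lambda>i. t * (w i * A v i - u i * A v i))"
      by (simp add: fun_eq_iff algebra_simps)
    ultimately show "(\<Sum>i. t * (w i - u i) * A v i) = 0"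
      using u w v feasible_iff by (simp add: sums_iff)
  qed
qed

text \<open>The Fourier coefficients of \<open>g\<^sub>i\<close> in an orthogonal basis \<open>C\<close> of \<open>span B\<close> are \<open>(A c)\<^sub>i\<close>,
  which tend to zero because \<open>A\<close> maps into \<open>c\<^sub>0\<close>.\<close>

lemma coordinate_representers:
  obtains g where "\<And>i. g i \<in> span B" "\<And>i v. v \<in> span B \<Longrightarrow> inner (g i) v = A v i"
    "(\<lambda>i. norm (g i)) \<longlonglongrightarrow> 0"
proof -
  obtain C where C: "finite C" "span C = span B" "pairwise orthogonal C"
    using basis_orthogonal[OF B_fin] by blast
  define g where "g i = (\<Sum>c\<in>C. (A c i / inner c c) *\<^sub>R c)" for i
  have "g i \<in> span B" for i
    unfolding g_def C(2)[symmetric] by (intro span_sum span_scale span_base)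
  moreover have "inner (g i) v = A v i" if "v \<in> span B" for i v
    unfolding g_def using orthogonal_basis_representer[OF C(1,3) linear_A_coordinate] C(2) that
    by simp
  moreover have "g \<longlonglongrightarrow> (\<Sum>c\<in>C. 0 *\<^sub>R c)"
    unfolding g_def using A_c0 unfolding in_c0_def
    by (intro tendsto_sum tendsto_scaleR tendsto_const tendsto_divide_zero) auto
  then have "(\<lambda>i. norm (g i)) \<longlonglongrightarrow> 0"
    by (simp add: tendsto_norm_zero)
  ultimately show thesis
    using that by blast
qed

lemma minimizer_finite_support:
  assumes u: "l1_minimizer F u"
  shows "finite (supp u)"
proof -
  obtain g where g: "\<And>i. g i \<in> span B" "\<And>i v. v \<in> span B \<Longrightarrow> inner (g i) v = A v i"
    and g_zero: "(\<lambda>i. norm (g i)) \<longlonglongrightarrow> 0"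
    using coordinate_representers by blast
  have relation: "(\<Sum>j\<in>D. d j * sgn (u j)) = 0"
    if D: "finite D" "D \<subseteq> supp u" and rel: "(\<Sum>j\<in>D. d j *\<^sub>R g j) = 0" for D d
  proof -
    define d' where "d' j = (if j \<in> D then d j else 0)" for j
    have d'_out: "d' j = 0" if "j \<notin> D" for j
      using that by (simp add: d'_def)
    have "F (\<lambda>j. u j + t * d' j)" for t
    proof (rule feasible_add)
      show "F u"
        using u unfolding l1_minimizer_def by blast
      show "in_l1 (\<lambda>j. t * d' j)"
        using D(1) d'_out by (intro in_l1_finite_supp) auto
      fix v assume v: "v \<in> span B"
      have "(\<Sum>j. t * d' j * A v j) = (\<Sum>j\<in>D. t * d' j * A v j)"
        using D(1) d'_out by (intro suminf_finite) auto
      also have "\<dots> = t * inner (\<Sum>j\<in>D. d j *\<^sub>R g j) v"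
        using g(2)[OF v] by (simp add: d'_def inner_sum_left sum_distrib_left mult.assoc)
      finally show "(\<Sum>j. t * d' j * A v j) = 0"
        using rel by simp
    qed
    then have "(\<Sum>j\<in>D. sgn (u j) * d' j) = 0"
      using minimizer_first_order[where d = d', OF u D d'_out] by blast
    then show ?thesis
      by (simp add: d'_def mult.commute)
  qed
  have "\<exists>q. \<forall>j\<in>supp u. sgn (u j) = inner q (g j)"
    by (rule exists_inner_representation[OF B_fin g(1) relation])
  then obtain q where q: "\<And>j. j \<in> supp u \<Longrightarrow> sgn (u j) = inner q (g j)"
    by blast
  have "(\<lambda>i. norm q * norm (g i)) \<longlonglongrightarrow> norm q * 0"
    by (intro tendsto_mult tendsto_const g_zero)
  then have "eventually (\<lambda>i. norm q * norm (g i) < 1) sequentially"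
    by (intro order_tendstoD(2)) auto
  then obtain N where N: "\<And>i. i \<ge> N \<Longrightarrow> norm q * norm (g i) < 1"
    unfolding eventually_sequentially by blast
  have "supp u \<subseteq> {..<N}"
  proof
    fix i assume i: "i \<in> supp u"
    then have "\<bar>sgn (u i)\<bar> = 1"
      by (cases "u i > 0") (auto simp: supp_def)
    then have "1 = \<bar>inner q (g i)\<bar>"
      using q[OF i] by simp
    also have "\<dots> \<le> norm q * norm (g i)"
      by (rule Cauchy_Schwarz_ineq2)
    finally show "i \<in> {..<N}"
      unfolding lessThan_iff using N[of i] by linarith
  qed
  then show ?thesis
    using finite_subset by blast
qed

end


theorem lemma5:
  fixes A :: "'h::{real_inner, complete_space} \<Rightarrow> (nat \<Rightarrow> real)"
    and A' :: "(nat \<Rightarrow> real) \<Rightarrow> 'h"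
    and B :: "'h set" and n :: nat and fdelta :: 'h
  assumes A_lin: "\<And>a b x y. A (a *\<^sub>R x + b *\<^sub>R y) = (\<lambda>i. a * A x i + b * A y i)"
    and A_c0: "\<And>z. in_c0 (A z)"
    and A_bdd: "\<exists>C. \<forall>z i. \<bar>A z i\<bar> \<le> C * norm z"
    and A'_lin: "\<And>u v a b. in_l1 u \<Longrightarrow> in_l1 v \<Longrightarrow> A' (\<lambda>i. a * u i + b * v i) = a *\<^sub>R A' u + b *\<^sub>R A' v"
    and adjoint: "\<And>u z. in_l1 u \<Longrightarrow> inner (A' u) z = (\<Sum>i. u i * A z i)"
    and A_inj: "inj A"
    and A'_inj: "inj_on A' {u. in_l1 u}"
    and B_fin: "finite B" and B_ind: "independent B" and B_card: "card B = n"
  shows "\<forall>u. is_solution (span B) A' fdelta u \<longrightarrow>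
           (\<exists>(k::nat) c w. (\<forall>j<k. is_minsupp_solution (span B) A' fdelta (w j) \<and> c j \<ge> (0::real))
                    \<and> (\<Sum>j<k. c j) = 1
                    \<and> u = (\<lambda>i. \<Sum>j<k. c j * w j i))"
proof -
  interpret projected_l1_problem A A' B fdelta
    using A_lin A_c0 A_bdd adjoint B_fin by unfold_locales auto
  have solution: "is_solution (span B) A' fdelta = l1_minimizer F"
    by (simp add: fun_eq_iff is_solution_def l1_minimizer_def)
  have "is_minsupp_solution (span B) A' fdelta = minimal_support_minimizer F"
    by (simp add: fun_eq_iff is_minsupp_solution_def minimal_support_minimizer_def solution)
  with solution show ?thesis
    using minimizer_convex_combination_of_minimal minimizer_finite_support
    unfolding convex_combination_of_def by auto
qed

end
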